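(* For the scaled single-server CDN described in the context, $$\lim_{c\to\infty}\frac1c J_1^c=\lim_{c\to\infty}\frac1c J_{ub}^c,$$ where $J_1^c$ is the throughput of the scaled system and $J_{ub}^c=\min\big(\lambda^c(0),\mu^c\big)$.
   Context: A single surrogate server in a planar network region $G$ of area $\mathcal{A}$ serves requests first-come-first-served with exponential service rate $\mu^c=c\mu$, where $c\ge1$ is a scaling factor. Requests arrive as a Poisson process of rate $\lambda^c=c\lambda$ with locations uniform on $G$; the disc of radius $\psi$ around the server lies in $G$; $\mathcal{A}$ and the latency bound $\psi>0$ do not depend on $c$. A request arriving when the server holds $n$ requests is routed to it iff its location is within distance $\psi-(n+1)/\mu^c$ of the server. Thus the number of requests is a birth–death chain on $\{0,\dots,N^c\}$, $N^c=\lceil\psi c\mu-1\rceil$, with death rate $\mu^c$ and birth rate $\lambda^c(n)=\frac{c\lambda}{\mathcal{A}}\pi\big(\psi-\frac{n+1}{c\mu}\big)^2$ for $n<N^c$ ($0$ at $N^c$). The throughput $J_1^c$ is the long-run rate of served requests. *)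

theory Defs
  imports Complex_Main
begin

text \<open>Scaled single-server CDN. Parameters: arrival rate lam, service rate mu,
 area A of the region G, latency bound psi, scaling factor c.\<close>

definition cap :: "real \<Rightarrow> real \<Rightarrow> real \<Rightarrow> nat" where
  "cap psi mu c = nat \<lceil>psi * c * mu - 1\<rceil>"

definition birth :: "real \<Rightarrow> real \<Rightarrow> real \<Rightarrow> real \<Rightarrow> real \<Rightarrow> nat \<Rightarrow> real" where
  "birth lam mu A psi c n =
     (if n < cap psi mu c
      then (c * lam / A) * pi * (psi - (real n + 1) / (c * mu))^2 else 0)"

text \<open>Unnormalised stationary weights of the birth-death chain on {0..N}.\<close>
definition weight :: "real \<Rightarrow> real \<Rightarrow> real \<Rightarrow> real \<Rightarrow> real \<Rightarrow> nat \<Rightarrow> real" where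
  "weight lam mu A psi c n = (\<Prod>k<n. birth lam mu A psi c k / (c * mu))"

definition stat_dist :: "real \<Rightarrow> real \<Rightarrow> real \<Rightarrow> real \<Rightarrow> real \<Rightarrow> nat \<Rightarrow> real" where
  "stat_dist lam mu A psi c n =
     weight lam mu A psi c n / (\<Sum>m\<le>cap psi mu c. weight lam mu A psi c m)"

text \<open>Throughput: long-run rate of served requests = mu^c * P(server busy).\<close>
definition throughput :: "real \<Rightarrow> real \<Rightarrow> real \<Rightarrow> real \<Rightarrow> real \<Rightarrow> real" where
  "throughput lam mu A psi c = (c * mu) * (1 - stat_dist lam mu A psi c 0)"

definition throughput_ub :: "real \<Rightarrow> real \<Rightarrow> real \<Rightarrow> real \<Rightarrow> real \<Rightarrow> real" where
  "throughput_ub lam mu A psi c = min (birth lam mu A psi c 0) (c * mu)"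

end

theory Submission imports Defs begin

text \<open>With ratios \<open>r\<^sub>k = \<lambda>\<^sup>c(k)/\<mu>\<^sup>c\<close> and normalising constant
  \<open>S\<^sub>c = \<Sum>\<^sub>n \<Prod>\<^sub>k\<^sub><\<^sub>n r\<^sub>k\<close>, the scaled throughput is \<open>J\<^sub>1\<^sup>c/c = \<mu>(1 - 1/S\<^sub>c)\<close>.
  Birth rates decrease in \<open>n\<close>, so \<open>S\<^sub>c - 1 \<le> S\<^sub>c r\<^sub>0\<close>, which gives \<open>J\<^sub>1\<^sup>c \<le> J\<^sub>u\<^sub>b\<^sup>c\<close>;
  the latter, divided by \<open>c\<close>, tends to \<open>min (\<lambda>\<pi>\<psi>\<^sup>2/A) \<mu>\<close>. Conversely, for fixed
  \<open>\<eta> > 0\<close> the first \<open>\<lfloor>c\<mu>\<eta>\<rfloor>\<close> ratios are at least \<open>q = \<lambda>\<pi>(\<psi> - \<eta>)\<^sup>2/(A\<mu>)\<close>,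
  so \<open>S\<^sub>c\<close> dominates a geometric sum of ratio \<open>q\<close> whose length tends to infinity,
  and \<open>J\<^sub>1\<^sup>c/c\<close> is eventually close to \<open>\<mu> q\<close>; letting \<open>\<eta> \<rightarrow> 0\<close> closes the gap.\<close>

lemma sum_prod_ratio_eq:
  fixes r :: "nat \<Rightarrow> real"
  shows "(\<Sum>m\<le>N. \<Prod>k<m. r k) = 1 + (\<Sum>m<N. (\<Prod>k<m. r k) * r m)"
  by (simp add: sum.atMost_shift)

lemma one_minus_inverse_sum_prod_le:
  fixes r :: "nat \<Rightarrow> real"
  assumes r_nonneg: "\<And>k. k < N \<Longrightarrow> 0 \<le> r k" and r_le: "\<And>k. k < N \<Longrightarrow> r k \<le> \<rho>"
    and "0 \<le> \<rho>"
  shows "1 - 1 / (\<Sum>m\<le>N. \<Prod>k<m. r k) \<le> \<rho>"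
proof -
  define S where "S = (\<Sum>m\<le>N. \<Prod>k<m. r k)"
  have w_nonneg: "0 \<le> (\<Prod>k<m. r k)" if "m \<le> N" for m
    using r_nonneg that by (intro prod_nonneg) auto
  have "S - 1 = (\<Sum>m<N. (\<Prod>k<m. r k) * r m)"
    unfolding S_def sum_prod_ratio_eq by simp
  also have "\<dots> \<le> (\<Sum>m<N. (\<Prod>k<m. r k)) * \<rho>"
    unfolding sum_distrib_right using w_nonneg r_le
    by (intro sum_mono mult_left_mono) auto
  also have "\<dots> \<le> S * \<rho>"
    unfolding S_def using w_nonneg \<open>0 \<le> \<rho>\<close>
    by (intro mult_right_mono sum_mono2) auto
  finally have "S - 1 \<le> S * \<rho>" .
  moreover have "0 \<le> (\<Sum>m<N. (\<Prod>k<m. r k) * r m)"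
    using w_nonneg r_nonneg by (intro sum_nonneg mult_nonneg_nonneg) auto
  then have "1 \<le> S"
    unfolding S_def sum_prod_ratio_eq by simp
  ultimately show ?thesis
    unfolding S_def[symmetric] by (simp add: field_simps)
qed

lemma inverse_sum_prod_le_geometric:
  fixes r :: "nat \<Rightarrow> real"
  assumes "M \<le> N" and r_nonneg: "\<And>k. k < N \<Longrightarrow> 0 \<le> r k"
    and q_le: "\<And>k. k < M \<Longrightarrow> q \<le> r k" and "0 \<le> q" and "q < 1"
  shows "1 / (\<Sum>m\<le>N. \<Prod>k<m. r k) \<le> (1 - q) / (1 - q ^ Suc M)"
proof -
  have "(1 - q ^ Suc M) / (1 - q) = (\<Sum>m\<le>M. q ^ m)"
    using sum_gp_strict[of q "Suc M"] \<open>q < 1\<close> by (simp add: lessThan_Suc_atMost)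
  also have "\<dots> \<le> (\<Sum>m\<le>M. \<Prod>k<m. r k)"
  proof (intro sum_mono)
    fix m assume "m \<in> {..M}"
    then have "(\<Prod>k<m. q) \<le> (\<Prod>k<m. r k)"
      using q_le \<open>0 \<le> q\<close> by (intro prod_mono) auto
    then show "q ^ m \<le> (\<Prod>k<m. r k)" by simp
  qed
  also have "\<dots> \<le> (\<Sum>m\<le>N. \<Prod>k<m. r k)"
    using \<open>M \<le> N\<close> r_nonneg by (intro sum_mono2 prod_nonneg) auto
  finally have "(1 - q ^ Suc M) / (1 - q) \<le> (\<Sum>m\<le>N. \<Prod>k<m. r k)" .
  moreover have "q ^ Suc M < 1"
    using power_strict_mono[of q 1 "Suc M"] \<open>0 \<le> q\<close> \<open>q < 1\<close> by simp
  then have "0 < (1 - q ^ Suc M) / (1 - q)"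
    using \<open>q < 1\<close> by simp
  ultimately show ?thesis
    using frac_le[of 1 1 "(1 - q ^ Suc M) / (1 - q)"] by simp
qed

context
  fixes lam mu A psi :: real
begin

lemma less_cap_iff: "m < cap psi mu c \<longleftrightarrow> real m + 1 < psi * c * mu"
  unfolding cap_def zless_nat_eq_int_zless less_ceiling_iff by linarith

lemma throughput_div_eq:
  "c \<noteq> 0 \<Longrightarrow> throughput lam mu A psi c / c
     = mu * (1 - 1 / (\<Sum>m\<le>cap psi mu c. \<Prod>k<m. birth lam mu A psi c k / (c * mu)))"
  by (simp add: throughput_def stat_dist_def weight_def)

lemma birth_nonneg: "0 \<le> lam \<Longrightarrow> 0 \<le> A \<Longrightarrow> 0 \<le> c \<Longrightarrow> 0 \<le> birth lam mu A psi c n"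
  by (simp add: birth_def)

lemma birth_antimono:
  assumes "0 \<le> lam" "0 \<le> A" "0 < c" "0 < mu" "j \<le> k" "k < cap psi mu c"
  shows "birth lam mu A psi c k \<le> birth lam mu A psi c j"
proof -
  have "0 \<le> psi - (real k + 1) / (c * mu)"
    using \<open>k < cap psi mu c\<close> \<open>0 < c\<close> \<open>0 < mu\<close> by (simp add: less_cap_iff field_simps)
  moreover have "psi - (real k + 1) / (c * mu) \<le> psi - (real j + 1) / (c * mu)"
    using \<open>j \<le> k\<close> \<open>0 < c\<close> \<open>0 < mu\<close> by (simp add: divide_right_mono)
  ultimately have "(psi - (real k + 1) / (c * mu))^2 \<le> (psi - (real j + 1) / (c * mu))^2"
    by (rule power_mono[rotated])
  then have "c * lam / A * pi * (psi - (real k + 1) / (c * mu))^2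
      \<le> c * lam / A * pi * (psi - (real j + 1) / (c * mu))^2"
    using assms by (intro mult_left_mono) auto
  then show ?thesis
    using assms unfolding birth_def by simp
qed

lemma birth_ge:
  assumes "0 \<le> lam" "0 \<le> A" "0 < c" "0 < mu" "real k + 1 \<le> c * mu * eta" "eta < psi"
  shows "c * lam / A * pi * (psi - eta)^2 \<le> birth lam mu A psi c k"
proof -
  have "c * mu * eta < psi * c * mu"
    using assms by (simp add: mult.commute)
  then have "k < cap psi mu c"
    unfolding less_cap_iff using assms(5) by linarith
  have "(real k + 1) / (c * mu) \<le> eta"
    using assms by (simp add: field_simps)
  then have "(psi - eta)^2 \<le> (psi - (real k + 1) / (c * mu))^2"
    using \<open>eta < psi\<close> by (intro power_mono) auto
  then have "c * lam / A * pi * (psi - eta)^2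
      \<le> c * lam / A * pi * (psi - (real k + 1) / (c * mu))^2"
    using assms by (intro mult_left_mono) auto
  then show ?thesis
    using \<open>k < cap psi mu c\<close> unfolding birth_def by simp
qed

lemma throughput_le_ub:
  assumes "0 \<le> lam" "0 \<le> A" "0 < mu" "0 < c"
  shows "throughput lam mu A psi c / c \<le> throughput_ub lam mu A psi c / c"
proof -
  let ?r = "\<lambda>k. birth lam mu A psi c k / (c * mu)"
  let ?S = "\<Sum>m\<le>cap psi mu c. \<Prod>k<m. ?r k"
  have r_nonneg: "0 \<le> ?r k" for k
    using assms by (simp add: birth_nonneg)
  have "1 - 1 / ?S \<le> ?r 0"
  proof (rule one_minus_inverse_sum_prod_le)
    show "?r k \<le> ?r 0" if "k < cap psi mu c" for k
      using assms that by (intro divide_right_mono birth_antimono) auto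
  qed (use r_nonneg in auto)
  then have "mu * (1 - 1 / ?S) \<le> mu * ?r 0"
    using assms by (intro mult_left_mono) auto
  also have "\<dots> = birth lam mu A psi c 0 / c"
    using assms by simp
  finally have "mu * (1 - 1 / ?S) \<le> birth lam mu A psi c 0 / c" .
  moreover have "0 \<le> ?S"
    using r_nonneg by (intro sum_nonneg prod_nonneg) auto
  then have "mu * (1 - 1 / ?S) \<le> mu"
    using assms by simp
  ultimately show ?thesis
    using assms throughput_div_eq[of c]
    unfolding throughput_ub_def min_divide_distrib_right by simp
qed

lemma throughput_ge:
  assumes "0 \<le> lam" "0 < A" "0 < mu" "0 < c" "eta < psi"
    and "0 \<le> q" "q < 1" "q \<le> lam / A * pi * (psi - eta)^2 / mu"
  shows "mu * (1 - (1 - q) / (1 - q ^ Suc (nat \<lfloor>c * mu * eta\<rfloor>)))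
           \<le> throughput lam mu A psi c / c"
proof -
  define M where "M = nat \<lfloor>c * mu * eta\<rfloor>"
  let ?r = "\<lambda>k. birth lam mu A psi c k / (c * mu)"
  have M_bound: "real k + 1 \<le> c * mu * eta" if "k < M" for k
  proof -
    have "int k + 1 \<le> \<lfloor>c * mu * eta\<rfloor>"
      using that unfolding M_def zless_nat_eq_int_zless by linarith
    then show ?thesis
      unfolding le_floor_iff by simp
  qed
  have "M \<le> cap psi mu c"
  proof (rule ccontr)
    assume "\<not> M \<le> cap psi mu c"
    then have "real (cap psi mu c) + 1 \<le> c * mu * eta"
      by (intro M_bound) simp
    also have "\<dots> < psi * c * mu"
      using assms by (simp add: mult.commute)
    finally show False
      using less_cap_iff[of "cap psi mu c" c] by simp
  qed
  moreover have "q \<le> ?r k" if "k < M" for k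
  proof -
    have "c * lam / A * pi * (psi - eta)^2 \<le> birth lam mu A psi c k"
      using assms M_bound[OF that] by (intro birth_ge) auto
    then have "lam / A * pi * (psi - eta)^2 / mu \<le> ?r k"
      using assms by (simp add: field_simps)
    then show ?thesis
      using assms by linarith
  qed
  moreover have "0 \<le> ?r k" for k
    using assms by (simp add: birth_nonneg)
  ultimately have "1 / (\<Sum>m\<le>cap psi mu c. \<Prod>k<m. ?r k) \<le> (1 - q) / (1 - q ^ Suc M)"
    using assms by (intro inverse_sum_prod_le_geometric) auto
  then show ?thesis
    using assms throughput_div_eq[of c] unfolding M_def by simp
qed

lemma eventually_throughput_gt:
  assumes "0 \<le> lam" "0 < A" "0 < mu" "0 < eta" "eta < psi"
    and "0 \<le> q" "q < 1" "q \<le> lam / A * pi * (psi - eta)^2 / mu" and "y < mu * q"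
  shows "eventually (\<lambda>c. y < throughput lam mu A psi c / c) at_top"
proof -
  define g where "g n = mu * (1 - (1 - q) / (1 - q ^ Suc n))" for n
  have "g \<longlonglongrightarrow> mu * (1 - (1 - q) / (1 - 0))"
    unfolding g_def using assms
    by (intro tendsto_intros LIMSEQ_power_zero[THEN LIMSEQ_Suc]) auto
  then have g_lim: "g \<longlonglongrightarrow> mu * q"
    by simp
  have "filterlim (\<lambda>c. c * (mu * eta)) at_top at_top"
    using assms by (intro filterlim_at_top_mult_tendsto_pos[OF tendsto_const] filterlim_ident) simp
  then have M_lim: "filterlim (\<lambda>c. nat \<lfloor>c * mu * eta\<rfloor>) sequentially at_top"
    unfolding mult.assoc
    by (intro filterlim_compose[OF filterlim_nat_sequentially]
        filterlim_compose[OF filterlim_floor_sequentially])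
  have "eventually (\<lambda>c. y < g (nat \<lfloor>c * mu * eta\<rfloor>)) at_top"
    using order_tendstoD(1)[OF filterlim_compose[OF g_lim M_lim] \<open>y < mu * q\<close>] by simp
  with eventually_gt_at_top[of 0] show ?thesis
  proof eventually_elim
    case (elim c)
    moreover have "g (nat \<lfloor>c * mu * eta\<rfloor>) \<le> throughput lam mu A psi c / c"
      unfolding g_def using elim assms by (intro throughput_ge) auto
    ultimately show ?case
      by linarith
  qed
qed

lemma throughput_ub_tendsto:
  assumes "0 < mu" "0 < psi"
  shows "((\<lambda>c. throughput_ub lam mu A psi c / c) \<longlongrightarrow> min (lam / A * pi * psi^2) mu) at_top"
proof -
  have ub_eventually_eq: "eventually (\<lambda>c. min (lam / A * pi * (psi - 1 / (c * mu))^2) mu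
                       = throughput_ub lam mu A psi c / c) at_top"
    using eventually_gt_at_top[of "max 0 (1 / (psi * mu))"]
  proof eventually_elim
    case (elim c)
    then have "0 < c"
      by simp
    moreover have "1 < psi * c * mu"
      using elim assms by (simp add: field_simps)
    then have "0 < cap psi mu c"
      using less_cap_iff[of 0 c] by simp
    ultimately show ?case
      unfolding throughput_ub_def min_divide_distrib_right birth_def by simp
  qed
  have "filterlim (\<lambda>c. c * mu) at_infinity at_top"
    using assms by (intro filterlim_at_top_imp_at_infinity
        filterlim_at_top_mult_tendsto_pos[OF tendsto_const] filterlim_ident)
  then have "((\<lambda>c. 1 / (c * mu)) \<longlongrightarrow> 0) at_top"
    by (intro tendsto_divide_0[OF tendsto_const])
  then have "((\<lambda>c. min (lam / A * pi * (psi - 1 / (c * mu))^2) mu)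
               \<longlongrightarrow> min (lam / A * pi * (psi - 0)^2) mu) at_top"
    by (intro tendsto_intros)
  from Lim_transform_eventually[OF this ub_eventually_eq] show ?thesis
    by simp
qed

lemma eventually_throughput_gt_below_limit:
  assumes "0 \<le> lam" "0 < A" "0 < mu" "0 < psi" "y < min (lam / A * pi * psi^2) mu"
  shows "eventually (\<lambda>c. y < throughput lam mu A psi c / c) at_top"
proof -
  \<comment> \<open>capped by \<open>1 - eta\<close> so that the geometric ratio stays below 1\<close>
  define q where "q eta = min (lam / A * pi * (psi - eta)^2 / mu) (1 - eta)" for eta
  have "((\<lambda>eta. mu * q eta) \<longlongrightarrow> mu * min (lam / A * pi * (psi - 0)^2 / mu) (1 - 0)) (at_right 0)"
    using assms unfolding q_def by (intro tendsto_intros) auto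
  moreover have "mu * min (lam / A * pi * (psi - 0)^2 / mu) (1 - 0) = min (lam / A * pi * psi^2) mu"
    using assms by (simp add: min_mult_distrib_left)
  ultimately have "((\<lambda>eta. mu * q eta) \<longlongrightarrow> min (lam / A * pi * psi^2) mu) (at_right 0)"
    by simp
  then have "eventually (\<lambda>eta. y < mu * q eta) (at_right 0)"
    using assms(5) by (rule order_tendstoD(1))
  moreover have "eventually (\<lambda>eta. eta < min psi 1) (at_right 0)"
    using assms by (intro order_tendstoD(2)[OF tendsto_ident_at]) simp
  ultimately have "eventually (\<lambda>eta. y < mu * q eta \<and> 0 < eta \<and> eta < min psi 1) (at_right 0)"
    using eventually_at_right_less by eventually_elim simp
  then obtain eta where "y < mu * q eta" "0 < eta" "eta < psi" "eta < 1"
    using eventually_happens'[OF trivial_limit_at_right_real] by auto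
  moreover have "0 \<le> q eta" "q eta < 1" "q eta \<le> lam / A * pi * (psi - eta)^2 / mu"
    using assms \<open>0 < eta\<close> \<open>eta < 1\<close> unfolding q_def by auto
  ultimately show ?thesis
    using assms by (intro eventually_throughput_gt) auto
qed

end

theorem lemma7:
  fixes lam mu A psi :: real
  assumes "lam > 0" and "mu > 0" and "A > 0" and "psi > 0"
    and "pi * psi^2 \<le> A"
  shows "\<exists>L. ((\<lambda>c. throughput lam mu A psi c / c) \<longlongrightarrow> L) at_top
           \<and> ((\<lambda>c. throughput_ub lam mu A psi c / c) \<longlongrightarrow> L) at_top"
proof -
  define L where "L = min (lam / A * pi * psi^2) mu"
  have ub: "((\<lambda>c. throughput_ub lam mu A psi c / c) \<longlongrightarrow> L) at_top"
    unfolding L_def using assms by (intro throughput_ub_tendsto) auto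
  have "((\<lambda>c. throughput lam mu A psi c / c) \<longlongrightarrow> L) at_top"
  proof (rule order_tendstoI)
    fix y assume "L < y"
    from order_tendstoD(2)[OF ub this] eventually_gt_at_top[of 0]
    show "eventually (\<lambda>c. throughput lam mu A psi c / c < y) at_top"
    proof eventually_elim
      case (elim c)
      with assms show ?case
        using throughput_le_ub[of lam A mu c psi] by linarith
    qed
  next
    fix y assume "y < L"
    then show "eventually (\<lambda>c. y < throughput lam mu A psi c / c) at_top"
      unfolding L_def using assms by (intro eventually_throughput_gt_below_limit) auto
  qed
  with ub show ?thesis
    by blast
qed

end
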